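(* Let $\gamma\in(0,1)$, $\lambda=0$, and assume $\widehat\Sigma$ is positive definite and $I-\gamma\widehat M^\pi$ is invertible. Define the (discounted) FQI-OPE estimator $\widehat v^\pi:=(\nu_0^\pi)^\top(I-\gamma\widehat M^\pi)^{-1}\widehat R$. For $f,g\in\mathcal Q$ define $$J(f,g):=\frac1N\sum_{n=1}^N\Big(\Big(f(s_n,a_n)-\gamma\int_{\mathcal A}f(s_n',a')\pi(a'\mid s_n')\,da'\Big)g(s_n,a_n)-\tfrac12 g(s_n,a_n)^2\Big)-\mathbb E\big[f(s_0,a_0)\mid s_0\sim\xi_0,a_0\sim\pi(\cdot\mid s_0)\big],$$ let $(f^*,g^* )$ be the solution of $\min_{f\in\mathcal Q}\max_{g\in\mathcal Q}J(f,g)$, and set $\widehat v^\pi_{\mathsf{DualDICE}}:=\frac1N\sum_{n=1}^N g^*(s_n,a_n)r_n'$. Then $\widehat v^\pi_{\mathsf{DualDICE}}=\widehat v^\pi$.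
   Context: $\mathcal X=\mathcal S\times\mathcal A$; $\pi$ is a target policy, $\xi_0$ an initial state distribution. $\phi:\mathcal X\to\mathbb R^d$ is a feature map, $\mathcal Q=\{\phi(\cdot)^\top w:w\in\mathbb R^d\}$, $\phi^\pi(s):=\int_{\mathcal A}\phi(s,a)\pi(a\mid s)\,da$. Data $\{(s_n,a_n,s_n',r_n')\}_{n=1}^N$. $\widehat\Sigma:=\lambda I+\sum_{n}\phi(s_n,a_n)\phi(s_n,a_n)^\top$, $\widehat R:=\widehat\Sigma^{-1}\sum_n r_n'\phi(s_n,a_n)$, $\widehat M^\pi:=\widehat\Sigma^{-1}\sum_n\phi(s_n,a_n)\phi^\pi(s_n')^\top$, $\nu_0^\pi:=\mathbb E[\phi(s,a)\mid s\sim\xi_0,a\sim\pi(\cdot\mid s)]$. *)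

theory Defs
  imports "HOL-Probability.Probability"
begin

definition outer :: "real^'n \<Rightarrow> real^'m \<Rightarrow> real^'m^'n" where
  "outer x y = (\<chi> i j. x$i * y$j)"

definition pos_def_mat :: "real^'n^'n \<Rightarrow> bool" where
  "pos_def_mat A \<longleftrightarrow> transpose A = A \<and> (\<forall>x. x \<noteq> 0 \<longrightarrow> x \<bullet> (A *v x) > 0)"

definition Qcls :: "('x \<Rightarrow> real^'d) \<Rightarrow> ('x \<Rightarrow> real) set" where
  "Qcls phi = {(\<lambda>x. phi x \<bullet> w) | w. True}"

definition phi_pi :: "('s \<Rightarrow> 'a measure) \<Rightarrow> ('s \<times> 'a \<Rightarrow> real^'d) \<Rightarrow> 's \<Rightarrow> real^'d" where
  "phi_pi pol phi s = integral\<^sup>L (pol s) (\<lambda>a. phi (s, a))"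

definition policy_kernel :: "('s \<Rightarrow> 'a measure) \<Rightarrow> bool" where
  "policy_kernel pol \<longleftrightarrow> (\<forall>s. prob_space (pol s))"

definition nu0 :: "'s measure \<Rightarrow> ('s \<Rightarrow> 'a measure) \<Rightarrow> ('s \<times> 'a \<Rightarrow> real^'d) \<Rightarrow> real^'d" where
  "nu0 xi0 pol phi = integral\<^sup>L xi0 (\<lambda>s. integral\<^sup>L (pol s) (\<lambda>a. phi (s, a)))"

definition Sigma_hat :: "real \<Rightarrow> ('s \<times> 'a \<Rightarrow> real^'d) \<Rightarrow> nat \<Rightarrow> (nat \<Rightarrow> 's) \<Rightarrow> (nat \<Rightarrow> 'a) \<Rightarrow> real^'d^'d" where
  "Sigma_hat lam phi N S A = lam *\<^sub>R mat 1 + (\<Sum>n\<in>{1..N}. outer (phi (S n, A n)) (phi (S n, A n)))"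

definition R_hat :: "real \<Rightarrow> ('s \<times> 'a \<Rightarrow> real^'d) \<Rightarrow> nat \<Rightarrow> (nat \<Rightarrow> 's) \<Rightarrow> (nat \<Rightarrow> 'a) \<Rightarrow> (nat \<Rightarrow> real) \<Rightarrow> real^'d" where
  "R_hat lam phi N S A r = matrix_inv (Sigma_hat lam phi N S A) *v (\<Sum>n\<in>{1..N}. r n *\<^sub>R phi (S n, A n))"

definition M_hat :: "real \<Rightarrow> ('s \<Rightarrow> 'a measure) \<Rightarrow> ('s \<times> 'a \<Rightarrow> real^'d) \<Rightarrow> nat \<Rightarrow> (nat \<Rightarrow> 's) \<Rightarrow> (nat \<Rightarrow> 'a) \<Rightarrow> (nat \<Rightarrow> 's) \<Rightarrow> real^'d^'d" where
  "M_hat lam pol phi N S A S' = matrix_inv (Sigma_hat lam phi N S A) **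
     (\<Sum>n\<in>{1..N}. outer (phi (S n, A n)) (phi_pi pol phi (S' n)))"

definition v_hat :: "real \<Rightarrow> real \<Rightarrow> 's measure \<Rightarrow> ('s \<Rightarrow> 'a measure) \<Rightarrow> ('s \<times> 'a \<Rightarrow> real^'d)
     \<Rightarrow> nat \<Rightarrow> (nat \<Rightarrow> 's) \<Rightarrow> (nat \<Rightarrow> 'a) \<Rightarrow> (nat \<Rightarrow> 's) \<Rightarrow> (nat \<Rightarrow> real) \<Rightarrow> real" where
  "v_hat lam gamma xi0 pol phi N S A S' r =
     nu0 xi0 pol phi \<bullet> (matrix_inv (mat 1 - gamma *\<^sub>R M_hat lam pol phi N S A S') *v R_hat lam phi N S A r)"

definition J_dd :: "real \<Rightarrow> 's measure \<Rightarrow> ('s \<Rightarrow> 'a measure) \<Rightarrow> nat \<Rightarrow> (nat \<Rightarrow> 's) \<Rightarrow> (nat \<Rightarrow> 'a) \<Rightarrow> (nat \<Rightarrow> 's)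
     \<Rightarrow> ('s \<times> 'a \<Rightarrow> real) \<Rightarrow> ('s \<times> 'a \<Rightarrow> real) \<Rightarrow> real" where
  "J_dd gamma xi0 pol N S A S' f g =
     (1 / real N) * (\<Sum>n\<in>{1..N}.
        (f (S n, A n) - gamma * integral\<^sup>L (pol (S' n)) (\<lambda>a'. f (S' n, a'))) * g (S n, A n)
        - 1/2 * (g (S n, A n))\<^sup>2)
     - integral\<^sup>L xi0 (\<lambda>s. integral\<^sup>L (pol s) (\<lambda>a. f (s, a)))"

end

theory Submission
  imports Defs
begin

text \<open>On linear classes the DualDICE objective is an explicit quadratic in the weights:
  with \<open>f = \<phi>\<^sup>T w\<close>, \<open>g = \<phi>\<^sup>T v\<close> and \<open>P = I - \<gamma> M\<close> one has
  \<open>N J(f, g) = v\<^sup>T \<Sigma> P w - v\<^sup>T \<Sigma> v / 2 - N \<nu>\<^sup>T w\<close>.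
  Completing the square in \<open>v\<close> shows that the inner maximiser is \<open>v = P w\<close>, with value
  \<open>(P w)\<^sup>T \<Sigma> (P w) / 2N - \<nu>\<^sup>T w\<close>; the first-order condition of the outer minimisation
  reads \<open>(P e)\<^sup>T \<Sigma> v\<^sup>* = N \<nu>\<^sup>T e\<close> for all \<open>e\<close>, where \<open>g\<^sup>* = \<phi>\<^sup>T v\<^sup>*\<close>. Choosing \<open>e = P\<^sup>-\<^sup>1 \<Sigma>\<^sup>-\<^sup>1 \<Sum> r\<^sub>n \<phi>\<^sub>n\<close>
  turns the left side into \<open>\<Sum> g\<^sup>*(s\<^sub>n, a\<^sub>n) r\<^sub>n\<close> and the right side into \<open>N v\<^sup>\<pi>\<close>.\<close>

lemma outer_mult_vec: "outer a b *v w = (b \<bullet> w) *\<^sub>R a"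
  by (simp add: outer_def matrix_vector_mult_def inner_vec_def vec_eq_iff sum_distrib_left
      mult.assoc mult.commute mult.left_commute)

lemma sum_matrix_vector_mult:
  "finite I \<Longrightarrow> sum f I *v (w :: 'a::semiring_1^'n) = (\<Sum>i\<in>I. f i *v w)"
  by (induction I rule: finite_induct) (auto simp: matrix_vector_mult_add_rdistrib)

lemma matrix_mul_matrix_inv:
  fixes A :: "real^'n^'n"
  assumes "invertible A"
  shows "A ** matrix_inv A = mat 1"
  using someI_ex[OF assms[unfolded invertible_def]] unfolding matrix_inv_def by auto

lemma inner_matrix_vector_symmetric:
  fixes A :: "real^'n^'n"
  assumes "transpose A = A"
  shows "x \<bullet> (A *v y) = y \<bullet> (A *v x)"
  by (metis assms dot_lmul_matrix inner_commute transpose_matrix_vector)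

lemma pos_def_mat_nonneg: "pos_def_mat A \<Longrightarrow> 0 \<le> x \<bullet> (A *v x)"
  unfolding pos_def_mat_def by (cases "x = 0") (auto intro: less_imp_le)

lemma pos_def_mat_invertible: "pos_def_mat A \<Longrightarrow> invertible A"
  unfolding pos_def_mat_def invertible_left_inverse
  by (metis inner_zero_right less_irrefl matrix_left_invertible_ker)

lemma pos_def_mat_nonzero: "pos_def_mat (A :: real^'n^'n) \<Longrightarrow> A \<noteq> 0"
  unfolding pos_def_mat_def by (metis inner_zero_right less_irrefl matrix_vector_mult_0 zero_neq_one)

lemma complete_square_symmetric:
  fixes A :: "real^'n^'n"
  assumes "transpose A = A"
  shows "v \<bullet> (A *v c) - 1/2 * (v \<bullet> (A *v v))
       = 1/2 * (c \<bullet> (A *v c)) - 1/2 * ((v - c) \<bullet> (A *v (v - c)))"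
  using inner_matrix_vector_symmetric[OF assms, of v c]
  by (simp add: algebra_simps)

lemma pos_def_concave_max:
  assumes "pos_def_mat A"
  shows "v \<bullet> (A *v c) - 1/2 * (v \<bullet> (A *v v)) \<le> 1/2 * (c \<bullet> (A *v c))"
  using assms complete_square_symmetric[of A v c] pos_def_mat_nonneg[OF assms, of "v - c"]
  unfolding pos_def_mat_def by simp

lemma pos_def_concave_argmax_unique:
  assumes "pos_def_mat A"
    and "1/2 * (c \<bullet> (A *v c)) \<le> v \<bullet> (A *v c) - 1/2 * (v \<bullet> (A *v v))"
  shows "v = c"
proof -
  have "(v - c) \<bullet> (A *v (v - c)) \<le> 0"
    using assms complete_square_symmetric[of A v c] unfolding pos_def_mat_def by simp
  then show ?thesis
    using assms(1) unfolding pos_def_mat_def by (metis eq_iff_diff_eq_0 not_less)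
qed

lemma linear_coeff_zero_if_quadratic_nonneg:
  fixes a b :: real
  assumes "\<And>t. 0 \<le> a * t + b * t\<^sup>2"
  shows "a = 0"
proof (rule ccontr)
  assume "a \<noteq> 0"
  define c where "c = \<bar>b\<bar> + 1"
  have c: "c > 0" "\<bar>b\<bar> \<le> c - 1" by (auto simp: c_def)
  have "0 \<le> a * (-a/c) + b * (-a/c)\<^sup>2" using assms by blast
  also have "\<dots> \<le> a * (-a/c) + \<bar>b\<bar> * (-a/c)\<^sup>2" by (simp add: mult_right_mono)
  also have "\<dots> = (a\<^sup>2/c\<^sup>2) * (\<bar>b\<bar> - c)" using c by (simp add: field_simps power2_eq_square)
  also have "\<dots> < 0" using c \<open>a \<noteq> 0\<close> by (intro mult_pos_neg) auto
  finally show False by simp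
qed

lemma quadratic_minimum_first_order:
  fixes A P :: "real^'n^'n"
  assumes "transpose A = A"
    and min: "\<And>w. k * ((P *v w0) \<bullet> (A *v (P *v w0))) - \<nu> \<bullet> w0
                  \<le> k * ((P *v w) \<bullet> (A *v (P *v w))) - \<nu> \<bullet> w"
  shows "2 * k * ((P *v e) \<bullet> (A *v (P *v w0))) = \<nu> \<bullet> e"
proof -
  define a where "a = 2 * k * ((P *v e) \<bullet> (A *v (P *v w0))) - \<nu> \<bullet> e"
  define b where "b = k * ((P *v e) \<bullet> (A *v (P *v e)))"
  have "0 \<le> a * t + b * t\<^sup>2" for t
  proof -
    have "k * ((P *v (w0 + t *\<^sub>R e)) \<bullet> (A *v (P *v (w0 + t *\<^sub>R e)))) - \<nu> \<bullet> (w0 + t *\<^sub>R e)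
        = k * ((P *v w0) \<bullet> (A *v (P *v w0))) - \<nu> \<bullet> w0 + (a * t + b * t\<^sup>2)"
      using inner_matrix_vector_symmetric[OF assms(1), of "P *v w0" "P *v e"]
      by (simp add: a_def b_def algebra_simps power2_eq_square)
    then show ?thesis using min[of "w0 + t *\<^sub>R e"] by linarith
  qed
  then have "a = 0" by (rule linear_coeff_zero_if_quadratic_nonneg)
  then show ?thesis unfolding a_def by simp
qed

lemma inner_eq_of_first_order:
  fixes \<Sigma> P :: "real^'n^'n"
  assumes "transpose \<Sigma> = \<Sigma>" "invertible \<Sigma>" "invertible P"
    and "\<And>e. (P *v e) \<bullet> (\<Sigma> *v y) = c * (\<nu> \<bullet> e)"
  shows "u \<bullet> y = c * (\<nu> \<bullet> (matrix_inv P *v (matrix_inv \<Sigma> *v u)))"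
proof -
  have "(P *v (matrix_inv P *v (matrix_inv \<Sigma> *v u))) \<bullet> (\<Sigma> *v y) = u \<bullet> y"
    using matrix_mul_matrix_inv[OF assms(3)] matrix_mul_matrix_inv[OF assms(2)]
    by (metis inner_matrix_vector_symmetric[OF assms(1)] matrix_vector_mul_assoc
        matrix_vector_mul_lid inner_commute)
  then show ?thesis using assms(4) by simp
qed

lemma Qcls_eq_range: "Qcls phi = range (\<lambda>w x. phi x \<bullet> w)"
  unfolding Qcls_def by auto

definition cross_hat :: "('s \<Rightarrow> 'a measure) \<Rightarrow> ('s \<times> 'a \<Rightarrow> real^'d) \<Rightarrow> nat \<Rightarrow> (nat \<Rightarrow> 's)
    \<Rightarrow> (nat \<Rightarrow> 'a) \<Rightarrow> (nat \<Rightarrow> 's) \<Rightarrow> real^'d^'d" where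
  "cross_hat pol phi N S A S' = (\<Sum>n\<in>{1..N}. outer (phi (S n, A n)) (phi_pi pol phi (S' n)))"

lemma Sigma_hat_mult_vec:
  "Sigma_hat lam phi N S A *v w = lam *\<^sub>R w + (\<Sum>n\<in>{1..N}. (phi (S n, A n) \<bullet> w) *\<^sub>R phi (S n, A n))"
  unfolding Sigma_hat_def
  by (simp add: matrix_vector_mult_add_rdistrib sum_matrix_vector_mult outer_mult_vec
      scaleR_matrix_vector_assoc[symmetric])

lemma M_hat_eq:
  "M_hat lam pol phi N S A S' = matrix_inv (Sigma_hat lam phi N S A) ** cross_hat pol phi N S A S'"
  unfolding M_hat_def cross_hat_def ..

lemma cross_hat_mult_vec:
  "cross_hat pol phi N S A S' *v w
     = (\<Sum>n\<in>{1..N}. (phi_pi pol phi (S' n) \<bullet> w) *\<^sub>R phi (S n, A n))"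
  unfolding cross_hat_def by (simp add: sum_matrix_vector_mult outer_mult_vec)

lemma Sigma_hat_mult_I_minus_M_hat:
  assumes "invertible (Sigma_hat lam phi N S A)"
  shows "Sigma_hat lam phi N S A *v ((mat 1 - gamma *\<^sub>R M_hat lam pol phi N S A S') *v w)
       = Sigma_hat lam phi N S A *v w - gamma *\<^sub>R (cross_hat pol phi N S A S' *v w)"
proof -
  have "Sigma_hat lam phi N S A *v (M_hat lam pol phi N S A S' *v w) = cross_hat pol phi N S A S' *v w"
    using matrix_mul_matrix_inv[OF assms] by (simp add: M_hat_eq matrix_vector_mul_assoc matrix_mul_assoc)
  then show ?thesis
    by (simp add: matrix_vector_mult_diff_rdistrib matrix_vector_mult_diff_distrib
        scaleR_matrix_vector_assoc[symmetric] matrix_vector_mult_scaleR)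
qed

lemma J_dd_linear:
  fixes phi :: "'s \<times> 'a \<Rightarrow> real^'d" and N S A S' gamma pol
  defines "\<Sigma> \<equiv> Sigma_hat 0 phi N S A"
    and "P \<equiv> mat 1 - gamma *\<^sub>R M_hat 0 pol phi N S A S'"
  assumes "invertible \<Sigma>"
    and "\<And>s. integrable (pol s) (\<lambda>a. phi (s, a))"
    and "integrable xi0 (phi_pi pol phi)"
  shows "J_dd gamma xi0 pol N S A S' (\<lambda>x. phi x \<bullet> w) (\<lambda>x. phi x \<bullet> v)
       = 1 / real N * (v \<bullet> (\<Sigma> *v (P *v w)) - 1/2 * (v \<bullet> (\<Sigma> *v v))) - nu0 xi0 pol phi \<bullet> w"
proof -
  have cross: "v \<bullet> (\<Sigma> *v (P *v w)) = (\<Sum>n\<in>{1..N}.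
      (phi (S n, A n) \<bullet> w - gamma * (phi_pi pol phi (S' n) \<bullet> w)) * (phi (S n, A n) \<bullet> v))"
    unfolding \<Sigma>_def P_def
    unfolding Sigma_hat_mult_I_minus_M_hat[OF assms(3)[unfolded \<Sigma>_def]]
    unfolding Sigma_hat_mult_vec cross_hat_mult_vec
    by (simp add: inner_sum_right sum_subtractf sum_distrib_left algebra_simps inner_commute)
  have square: "v \<bullet> (\<Sigma> *v v) = (\<Sum>n\<in>{1..N}. (phi (S n, A n) \<bullet> v)\<^sup>2)"
    unfolding \<Sigma>_def Sigma_hat_mult_vec by (simp add: inner_sum_right power2_eq_square inner_commute)
  have policy_mean: "integral\<^sup>L (pol s) (\<lambda>a. phi (s, a) \<bullet> w) = phi_pi pol phi s \<bullet> w" for s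
    using assms(4) unfolding phi_pi_def by simp
  have initial_mean: "integral\<^sup>L xi0 (\<lambda>s. phi_pi pol phi s \<bullet> w) = nu0 xi0 pol phi \<bullet> w"
    using assms(5) unfolding nu0_def phi_pi_def[symmetric] by simp
  show ?thesis
    unfolding J_dd_def cross square policy_mean initial_mean
    by (simp add: sum_subtractf sum_distrib_left right_diff_distrib)
qed

lemma SUP_J_dd_linear:
  fixes phi :: "'s \<times> 'a \<Rightarrow> real^'d" and N S A S' gamma pol
  defines "\<Sigma> \<equiv> Sigma_hat 0 phi N S A"
    and "P \<equiv> mat 1 - gamma *\<^sub>R M_hat 0 pol phi N S A S'"
  assumes "pos_def_mat \<Sigma>"
    and "\<And>s. integrable (pol s) (\<lambda>a. phi (s, a))"
    and "integrable xi0 (phi_pi pol phi)"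
  shows "(SUP g\<in>Qcls phi. J_dd gamma xi0 pol N S A S' (\<lambda>x. phi x \<bullet> w) g)
       = 1 / (2 * real N) * ((P *v w) \<bullet> (\<Sigma> *v (P *v w))) - nu0 xi0 pol phi \<bullet> w"
proof -
  note J = J_dd_linear[where gamma = gamma and S' = S',
      OF pos_def_mat_invertible[OF assms(3)[unfolded \<Sigma>_def]] assms(4,5), folded \<Sigma>_def P_def]
  show ?thesis
    unfolding Qcls_eq_range image_image
  proof (rule cSup_eq_maximum)
    show "1 / (2 * real N) * ((P *v w) \<bullet> (\<Sigma> *v (P *v w))) - nu0 xi0 pol phi \<bullet> w
        \<in> range (\<lambda>v. J_dd gamma xi0 pol N S A S' (\<lambda>x. phi x \<bullet> w) (\<lambda>x. phi x \<bullet> v))"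
      by (rule range_eqI[of _ _ "P *v w"]) (simp add: J)
    fix z
    assume "z \<in> range (\<lambda>v. J_dd gamma xi0 pol N S A S' (\<lambda>x. phi x \<bullet> w) (\<lambda>x. phi x \<bullet> v))"
    then obtain v where z: "z = J_dd gamma xi0 pol N S A S' (\<lambda>x. phi x \<bullet> w) (\<lambda>x. phi x \<bullet> v)"
      by blast
    have "(v \<bullet> (\<Sigma> *v (P *v w)) - 1/2 * (v \<bullet> (\<Sigma> *v v))) / real N
        \<le> (1/2 * ((P *v w) \<bullet> (\<Sigma> *v (P *v w)))) / real N"
      by (rule divide_right_mono[OF pos_def_concave_max[OF assms(3)]]) simp
    then show "z \<le> 1 / (2 * real N) * ((P *v w) \<bullet> (\<Sigma> *v (P *v w))) - nu0 xi0 pol phi \<bullet> w"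
      unfolding z J by simp
  qed
qed

theorem theorem6:
  fixes phi :: "'s \<times> 'a \<Rightarrow> real^'d"
    and pol :: "'s \<Rightarrow> 'a measure" and xi0 :: "'s measure"
    and N :: nat and S :: "nat \<Rightarrow> 's" and A :: "nat \<Rightarrow> 'a" and S' :: "nat \<Rightarrow> 's"
    and r :: "nat \<Rightarrow> real" and gamma :: real
    and fstar gstar :: "'s \<times> 'a \<Rightarrow> real"
  assumes "0 < gamma" and "gamma < 1"
    and "prob_space xi0" and "policy_kernel pol"
    and "\<forall>s. integrable (pol s) (\<lambda>a. phi (s, a))"
    and "integrable xi0 (phi_pi pol phi)"
    and "pos_def_mat (Sigma_hat 0 phi N S A)"
    and "invertible (mat 1 - gamma *\<^sub>R M_hat 0 pol phi N S A S')"
    and "fstar \<in> Qcls phi" and "gstar \<in> Qcls phi"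
    and "\<forall>g\<in>Qcls phi. J_dd gamma xi0 pol N S A S' fstar g \<le> J_dd gamma xi0 pol N S A S' fstar gstar"
    and "\<forall>f\<in>Qcls phi. (SUP g\<in>Qcls phi. J_dd gamma xi0 pol N S A S' fstar g)
                      \<le> (SUP g\<in>Qcls phi. J_dd gamma xi0 pol N S A S' f g)"
  shows "(1 / real N) * (\<Sum>n\<in>{1..N}. gstar (S n, A n) * r n) = v_hat 0 gamma xi0 pol phi N S A S' r"
proof -
  define \<Sigma> where "\<Sigma> = Sigma_hat 0 phi N S A"
  define P where "P = mat 1 - gamma *\<^sub>R M_hat 0 pol phi N S A S'"
  define \<nu> where "\<nu> = nu0 xi0 pol phi"
  have pd: "pos_def_mat \<Sigma>" using assms(7) unfolding \<Sigma>_def .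
  then have "\<Sigma> \<noteq> 0" by (rule pos_def_mat_nonzero)
  then have N: "real N > 0" unfolding \<Sigma>_def Sigma_hat_def by (cases N) auto
  obtain ws vs where fstar: "fstar = (\<lambda>x. phi x \<bullet> ws)" and gstar: "gstar = (\<lambda>x. phi x \<bullet> vs)"
    using assms(9,10) unfolding Qcls_def by auto
  note J = J_dd_linear[where gamma = gamma and S' = S',
      OF pos_def_mat_invertible[OF assms(7)] assms(5,6)[rule_format], folded \<Sigma>_def P_def \<nu>_def]
  note SUP_J = SUP_J_dd_linear[where gamma = gamma and S' = S',
      OF assms(7) assms(5,6)[rule_format], folded \<Sigma>_def P_def \<nu>_def]
  have "J_dd gamma xi0 pol N S A S' fstar (\<lambda>x. phi x \<bullet> (P *v ws)) \<le> J_dd gamma xi0 pol N S A S' fstar gstar"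
    using assms(11) unfolding Qcls_eq_range by blast
  then have gstar_weight: "vs = P *v ws"
    using N by (intro pos_def_concave_argmax_unique[OF pd]) (simp add: fstar gstar J field_simps)
  have "1 / (2 * real N) * ((P *v ws) \<bullet> (\<Sigma> *v (P *v ws))) - \<nu> \<bullet> ws
      \<le> 1 / (2 * real N) * ((P *v w) \<bullet> (\<Sigma> *v (P *v w))) - \<nu> \<bullet> w" for w
  proof -
    have "(\<lambda>x. phi x \<bullet> w) \<in> Qcls phi" unfolding Qcls_eq_range by blast
    from bspec[OF assms(12) this] show ?thesis unfolding fstar SUP_J .
  qed
  then have "(P *v e) \<bullet> (\<Sigma> *v vs) = real N * (\<nu> \<bullet> e)" for e
    using pd N quadratic_minimum_first_order[of \<Sigma> "1 / (2 * real N)" P ws \<nu> e]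
    unfolding pos_def_mat_def gstar_weight by (simp add: field_simps)
  then have "(\<Sum>n\<in>{1..N}. r n *\<^sub>R phi (S n, A n)) \<bullet> vs = real N * v_hat 0 gamma xi0 pol phi N S A S' r"
    unfolding v_hat_def R_hat_def \<Sigma>_def[symmetric] P_def[symmetric] \<nu>_def[symmetric]
    using pd[unfolded pos_def_mat_def] pos_def_mat_invertible[OF pd] assms(8)[folded P_def]
    by (intro inner_eq_of_first_order) simp_all
  then show ?thesis
    using N unfolding gstar by (simp add: inner_sum_right inner_commute mult.commute)
qed

end
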